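(* Let $\Omega\subset\mathbb R^d$ be convex and compact with nonempty interior, and let $m\ge 2$. Consider the set $$\mathcal S=\Bigl\{\mathbf x\mapsto\sum_{i=1}^p\psi_i(\mathbf w_i^T\mathbf x):\ p\in\mathbb N,\ \psi_i\in C^{1,1}(\mathbb R)\text{ convex},\ \mathbf w_i\in\mathbb R^d\Bigr\}.$$ (i) The functions $R\colon\mathbb R^d\to\mathbb R$ of the form $R(\mathbf x)=\sum_{i}\psi_i(\mathbf w_i^T\mathbf x)$ with convex $\psi_i$ whose gradient has the form $\nabla R(\mathbf x)=\mathbf W^T\boldsymbol\sigma(\mathbf W\mathbf x)$ for some $q\in\mathbb N$, $\mathbf W\in\mathbb R^{q\times d}$ and $\sigma_i\in\mathcal{LS}^m_{\uparrow}(\mathbb R)$, are dense in $\mathcal S$ with respect to $\|\cdot\|_{C^1(\Omega)}$. (ii) The functions $R$ of the form $R(\mathbf x)=\sum_i\psi_i(\mathbf w_i^T\mathbf x)$ whose gradient has the form $\nabla R(\mathbf x)=\mathbf W^T\mathrm{ReLU}(\mathbf W\mathbf x-\mathbf b)$ for some $q\in\mathbb N$, $\mathbf W\in\mathbb R^{q\times d}$, $\mathbf b\in\mathbb R^q$, are not dense in $\mathcal S$ with respect to $\|\cdot\|_{C^1(\Omega)}$.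
   Context: $C^{1,1}(\mathbb R)$ is the set of differentiable functions with Lipschitz-continuous derivative. $\boldsymbol\sigma$ and $\mathrm{ReLU}(t)=\max(t,0)$ act componentwise. $\mathcal{LS}^m_{\uparrow}(\mathbb R)$ is the set of increasing continuous piecewise-linear functions $\mathbb R\to\mathbb R$ with at most $m$ knots. For $f\colon\mathbb R^d\to\mathbb R$ differentiable, $\|f\|_{C^1(\Omega)}=\sup_{\mathbf x\in\Omega}|f(\mathbf x)|+\sup_{\mathbf x\in\Omega}\|\nabla f(\mathbf x)\|$. *)

theory Defs
  imports "HOL-Analysis.Analysis"
begin

definition C11 :: "(real \<Rightarrow> real) \<Rightarrow> bool" where
  "C11 \<psi> \<longleftrightarrow> (\<exists>\<psi>'. (\<forall>t. (\<psi> has_real_derivative \<psi>' t) (at t))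
                   \<and> (\<exists>L. \<forall>s t. \<bar>\<psi>' s - \<psi>' t\<bar> \<le> L * \<bar>s - t\<bar>))"

text \<open>Increasing continuous piecewise-linear functions with at most m knots:
  there is a finite knot set K with card K \<le> m such that the function is affine on
  every interval containing no knot in its interior.\<close>
definition LS_inc :: "nat \<Rightarrow> (real \<Rightarrow> real) set" where
  "LS_inc m = {\<sigma>. mono \<sigma> \<and> continuous_on UNIV \<sigma> \<and>
     (\<exists>K. finite K \<and> card K \<le> m \<and>
        (\<forall>a b. a < b \<and> {a<..<b} \<inter> K = {} \<longrightarrow>
           (\<exists>c0 c1. \<forall>t\<in>{a..b}. \<sigma> t = c0 + c1 * t)))}"

definition relu :: "real \<Rightarrow> real" where
  "relu t = max t 0"

definition grad :: "('a::euclidean_space \<Rightarrow> real) \<Rightarrow> 'a \<Rightarrow> 'a" where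
  "grad f x = (THE v. (f has_derivative (\<lambda>h. v \<bullet> h)) (at x))"

definition C1_norm :: "'a::euclidean_space set \<Rightarrow> ('a \<Rightarrow> real) \<Rightarrow> real" where
  "C1_norm \<Omega> f = (SUP x\<in>\<Omega>. \<bar>f x\<bar>) + (SUP x\<in>\<Omega>. norm (grad f x))"

definition ridge_sum :: "nat \<Rightarrow> (nat \<Rightarrow> real \<Rightarrow> real) \<Rightarrow> (nat \<Rightarrow> 'a::euclidean_space) \<Rightarrow> 'a \<Rightarrow> real" where
  "ridge_sum p \<psi> w x = (\<Sum>i<p. \<psi> i (w i \<bullet> x))"

definition S_set :: "('a::euclidean_space \<Rightarrow> real) set" where
  "S_set = {f. \<exists>p \<psi> w. (\<forall>i<p. C11 (\<psi> i) \<and> convex_on UNIV (\<psi> i)) \<and> f = ridge_sum p \<psi> w}"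

text \<open>Class (i): convex ridge sums whose gradient is W^T \<sigma>(W x), rows w_j of W, j<q.\<close>
definition class_i :: "nat \<Rightarrow> ('a::euclidean_space \<Rightarrow> real) set" where
  "class_i m = {R. (\<exists>p \<psi> v. (\<forall>i<p. convex_on UNIV (\<psi> i)) \<and> R = ridge_sum p \<psi> v) \<and>
     (\<exists>q (W::nat \<Rightarrow> 'a) \<sigma>. (\<forall>j<q. \<sigma> j \<in> LS_inc m) \<and>
        (\<forall>x. (R has_derivative (\<lambda>h. (\<Sum>j<q. \<sigma> j (W j \<bullet> x) *\<^sub>R W j) \<bullet> h)) (at x)))}"

definition class_ii :: "('a::euclidean_space \<Rightarrow> real) set" where
  "class_ii = {R. (\<exists>p \<psi> v. R = ridge_sum p \<psi> v) \<and>
     (\<exists>q (W::nat \<Rightarrow> 'a) b. 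
        (\<forall>x. (R has_derivative (\<lambda>h. (\<Sum>j<q. relu (W j \<bullet> x - b j) *\<^sub>R W j) \<bullet> h)) (at x)))}"

definition C1_dense_in :: "'a::euclidean_space set \<Rightarrow> ('a \<Rightarrow> real) set \<Rightarrow> ('a \<Rightarrow> real) set \<Rightarrow> bool" where
  "C1_dense_in \<Omega> A B \<longleftrightarrow> (\<forall>f\<in>B. \<forall>\<epsilon>>0. \<exists>g\<in>A. C1_norm \<Omega> (\<lambda>x. f x - g x) < \<epsilon>)"

end

theory Submission
  imports Defs
begin

(*
  (i) The derivative \<psi>' of a convex C^{1,1} profile is increasing and Lipschitz, so its
  piecewise-linear interpolant on a fine uniform grid is uniformly close to it; that interpolant
  is a constant plus a nonnegative combination of ramps relu(u) - relu(u - 1), each an increasing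
  function with two knots. Its primitive \<Psi> is convex and C^1-close to \<psi> on the bounded range
  of w^T x, so \<Psi>(w^T x) lies in class (i) and approximates \<psi>(w^T x); class (i) is closed
  under sums.

  (ii) Let f(x) = \<Phi>(w^T x - c) where \<Phi>' is the ramp. Along a segment x0 + t u in \<Omega> with
  w^T u = 1, the directional derivative of f is ramp(t), while that of a class (ii) function is
  \<Sum>_j c_j relu(c_j t + \<beta>_j). The functional h \<mapsto> h(2) - 2h(1) + 2h(0) - h(-1) is nonnegative
  on every c relu(c t + \<beta>) (for c \<ge> 0 it is a second plus a first difference of an increasing
  convex function; c \<le> 0 follows by reflection) but equals -1 on the ramp. Hence the gradient of
  f - g has norm at least 1/(6|u|) somewhere in \<Omega>, for every g of class (ii).
*)

lemma convex_on_imp_mono_deriv: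
  fixes f :: "real \<Rightarrow> real"
  assumes "\<And>x. (f has_real_derivative f' x) (at x)" "convex_on UNIV f"
  shows "mono f'"
proof (rule monoI)
  fix x y :: real
  assume "x \<le> y"
  have "f y - f x \<ge> f' x * (y - x)" "f x - f y \<ge> f' y * (x - y)"
    by (auto intro!: convex_on_imp_above_tangent[OF assms(2)] has_field_derivative_at_within
                     assms(1))
  then have "(f' y - f' x) * (y - x) \<ge> 0"
    by (simp add: algebra_simps)
  with \<open>x \<le> y\<close> show "f' x \<le> f' y"
    by (cases "x = y") (simp_all add: zero_le_mult_iff)
qed

lemma grad_eqI:
  fixes f :: "'a::euclidean_space \<Rightarrow> real"
  assumes "(f has_derivative (\<lambda>h. v \<bullet> h)) (at x)"
  shows "grad f x = v"
  unfolding grad_def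
proof (rule the_equality)
  fix u
  assume "(f has_derivative (\<lambda>h. u \<bullet> h)) (at x)"
  from has_derivative_unique[OF this assms] have "u \<bullet> (u - v) = v \<bullet> (u - v)"
    by metis
  then have "(u - v) \<bullet> (u - v) = 0"
    by (simp add: inner_diff_left)
  then show "u = v"
    by simp
qed (rule assms)

lemma has_derivative_ridge:
  fixes w :: "'a::euclidean_space"
  assumes "(\<Psi> has_real_derivative \<Psi>' (w \<bullet> x)) (at (w \<bullet> x))"
  shows "((\<lambda>x. \<Psi> (w \<bullet> x)) has_derivative (\<lambda>h. (\<Psi>' (w \<bullet> x) *\<^sub>R w) \<bullet> h)) (at x)"
proof -
  have "((\<lambda>x. w \<bullet> x) has_derivative (\<lambda>h. w \<bullet> h)) (at x)"
    by (auto intro!: derivative_eq_intros)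
  from DERIV_compose_FDERIV[OF assms this] show ?thesis
    by (simp add: mult.commute)
qed

definition ramp :: "real \<Rightarrow> real" where
  "ramp u = relu u - relu (u - 1)"

definition relu_antideriv :: "real \<Rightarrow> real" where
  "relu_antideriv u = (relu u)\<^sup>2 / 2"

definition ramp_antideriv :: "real \<Rightarrow> real" where
  "ramp_antideriv u = relu_antideriv u - relu_antideriv (u - 1)"

lemma ramp_mono: "u \<le> v \<Longrightarrow> ramp u \<le> ramp v"
  by (auto simp: ramp_def relu_def)

lemma ramp_nonneg: "0 \<le> ramp u" and ramp_le_one: "ramp u \<le> 1"
  by (auto simp: ramp_def relu_def)

lemma ramp_eq_0: "u \<le> 0 \<Longrightarrow> ramp u = 0"
  and ramp_eq_1: "1 \<le> u \<Longrightarrow> ramp u = 1"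
  and ramp_eq_id: "0 \<le> u \<Longrightarrow> u \<le> 1 \<Longrightarrow> ramp u = u"
  by (auto simp: ramp_def relu_def)

lemma ramp_lipschitz: "\<bar>ramp u - ramp v\<bar> \<le> \<bar>u - v\<bar>"
  by (auto simp: ramp_def relu_def)

lemma continuous_on_relu [continuous_intros]:
  "continuous_on A f \<Longrightarrow> continuous_on A (\<lambda>x. relu (f x))"
  unfolding relu_def by (intro continuous_intros)

lemma continuous_on_ramp [continuous_intros]:
  "continuous_on A f \<Longrightarrow> continuous_on A (\<lambda>x. ramp (f x))"
  unfolding ramp_def by (intro continuous_intros)

lemma has_real_derivative_relu_antideriv: "(relu_antideriv has_real_derivative relu t) (at t)"
proof -
  have square: "((\<lambda>u. u\<^sup>2 / 2) has_vector_derivative u) (at u within A)" for u :: real and A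
    unfolding has_real_derivative_iff_has_vector_derivative[symmetric]
    by (auto intro!: derivative_eq_intros)
  have "((\<lambda>u. if u \<in> {0<..} then u\<^sup>2 / 2 else 0) has_vector_derivative
          (if t \<in> {0<..} then t else 0)) (at t within UNIV)"
    by (rule has_vector_derivative_If_within_closures[where T = "{..0}"])
       (use square[of 0] in \<open>auto intro: square\<close>)
  moreover have "relu_antideriv = (\<lambda>u. if u \<in> {0<..} then u\<^sup>2 / 2 else 0)"
    by (auto simp: fun_eq_iff relu_antideriv_def relu_def)
  moreover have "relu t = (if t \<in> {0<..} then t else 0)"
    by (simp add: relu_def)
  ultimately show ?thesis
    by (simp add: has_real_derivative_iff_has_vector_derivative)
qed

lemma has_real_derivative_ramp_antideriv: "(ramp_antideriv has_real_derivative ramp t) (at t)"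
proof -
  have "((\<lambda>u. relu_antideriv (u - 1)) has_real_derivative relu (t - 1) * 1) (at t)"
    by (rule DERIV_chain2[OF has_real_derivative_relu_antideriv])
       (auto intro!: derivative_eq_intros)
  from DERIV_diff[OF has_real_derivative_relu_antideriv this]
  show ?thesis
    unfolding ramp_antideriv_def[abs_def] ramp_def by simp
qed

lemma has_real_derivative_scaled_ramp_antideriv:
  assumes "r > 0"
  shows "((\<lambda>u. r * ramp_antideriv ((u - c) / r)) has_real_derivative ramp ((t - c) / r)) (at t)"
proof -
  have "((\<lambda>u. ramp_antideriv ((u - c) / r)) has_real_derivative ramp ((t - c) / r) * (1 / r))
          (at t)"
    by (rule DERIV_chain2[OF has_real_derivative_ramp_antideriv])
       (use assms in \<open>auto intro!: derivative_eq_intros\<close>)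
  from DERIV_cmult[OF this, of r] show ?thesis
    using assms by simp
qed

lemma has_real_derivative_shifted_ramp_antideriv:
  "((\<lambda>u. ramp_antideriv (u - c)) has_real_derivative ramp (t - c)) (at t)"
  using has_real_derivative_scaled_ramp_antideriv[of 1 c t] by simp

lemma LS_inc_mono: "m \<le> n \<Longrightarrow> LS_inc m \<subseteq> LS_inc n"
  unfolding LS_inc_def by (force intro: le_trans)

lemma const_in_LS_inc: "(\<lambda>s. k) \<in> LS_inc m"
proof -
  have "\<exists>c0 c1. \<forall>s\<in>{l..r}. k = c0 + c1 * s" for l r :: real
    by (intro exI[of _ k] exI[of _ 0]) simp
  then show ?thesis
    unfolding LS_inc_def by (auto intro!: exI[of _ "{}"] monoI)
qed

lemma scaled_ramp_in_LS_inc: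
  assumes "0 \<le> c" "0 < d"
  shows "(\<lambda>s. c * ramp ((s - a) / d)) \<in> LS_inc 2"
proof -
  have affine: "\<exists>c0 c1. \<forall>s\<in>{l..r}. c * ramp ((s - a) / d) = c0 + c1 * s"
    if "l < r" "{l<..<r} \<inter> {a, a + d} = {}" for l r
  proof -
    have "\<not> (l < a \<and> a < r)" "\<not> (l < a + d \<and> a + d < r)"
      using that(2) by auto
    then consider "r \<le> a" | "a \<le> l" "r \<le> a + d" | "a + d \<le> l"
      using that(1) by linarith
    then show ?thesis
    proof cases
      case 1
      then have "\<forall>s\<in>{l..r}. c * ramp ((s - a) / d) = 0 + 0 * s"
        using assms by (auto intro!: ramp_eq_0 simp: divide_nonpos_pos)
      then show ?thesis by blast
    next
      case 2
      have "c * ramp ((s - a) / d) = - c * a / d + c / d * s" if "s \<in> {l..r}" for s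
      proof -
        have "ramp ((s - a) / d) = (s - a) / d"
          using 2 that assms by (intro ramp_eq_id) (auto simp: field_simps)
        then show ?thesis
          using assms by (simp add: diff_divide_distrib right_diff_distrib)
      qed
      then show ?thesis by blast
    next
      case 3
      then have "\<forall>s\<in>{l..r}. c * ramp ((s - a) / d) = c + 0 * s"
        using assms by (auto intro!: ramp_eq_1 simp: field_simps)
      then show ?thesis by blast
    qed
  qed
  show ?thesis
    unfolding LS_inc_def
    using assms affine
    by (auto intro!: exI[of _ "{a, a + d}"] monoI mult_left_mono ramp_mono divide_right_mono
                     continuous_intros simp: card_insert_if)
qed

text \<open>The interpolant of \<phi> at the nodes t 0 < ... < t N (constant outside [t 0, t N]) is
  written as the constant \<phi> (t 0) plus one rescaled ramp per cell. The pieces are kept apart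
  because each activation of a class (i) gradient may have only m knots.\<close>

definition interp_piece :: "(real \<Rightarrow> real) \<Rightarrow> (nat \<Rightarrow> real) \<Rightarrow> nat \<Rightarrow> real \<Rightarrow> real" where
  "interp_piece \<phi> t j s = (case j of
     0 \<Rightarrow> \<phi> (t 0)
   | Suc i \<Rightarrow> (\<phi> (t (Suc i)) - \<phi> (t i)) * ramp ((s - t i) / (t (Suc i) - t i)))"

definition linear_interp :: "(real \<Rightarrow> real) \<Rightarrow> (nat \<Rightarrow> real) \<Rightarrow> nat \<Rightarrow> real \<Rightarrow> real" where
  "linear_interp \<phi> t N s = (\<Sum>j<Suc N. interp_piece \<phi> t j s)"

definition linear_interp_antideriv ::
    "(real \<Rightarrow> real) \<Rightarrow> (nat \<Rightarrow> real) \<Rightarrow> nat \<Rightarrow> real \<Rightarrow> real" where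
  "linear_interp_antideriv \<phi> t N s = \<phi> (t 0) * s +
     (\<Sum>i<N. (\<phi> (t (Suc i)) - \<phi> (t i)) *
        ((t (Suc i) - t i) * ramp_antideriv ((s - t i) / (t (Suc i) - t i))))"

lemma linear_interp_eq:
  "linear_interp \<phi> t N s =
     \<phi> (t 0) + (\<Sum>i<N. (\<phi> (t (Suc i)) - \<phi> (t i)) * ramp ((s - t i) / (t (Suc i) - t i)))"
  unfolding linear_interp_def sum.lessThan_Suc_shift by (simp add: interp_piece_def)

lemma has_real_derivative_linear_interp_antideriv:
  assumes "strict_mono t"
  shows "(linear_interp_antideriv \<phi> t N has_real_derivative linear_interp \<phi> t N s) (at s)"
proof -
  have width: "t (Suc i) - t i > 0" for i
    using strict_monoD[OF assms, of i "Suc i"] by simp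
  have "((\<lambda>s. \<phi> (t 0) * s) has_real_derivative \<phi> (t 0)) (at s)"
    by (auto intro!: derivative_eq_intros)
  moreover have "((\<lambda>s. \<Sum>i<N. (\<phi> (t (Suc i)) - \<phi> (t i)) *
                      ((t (Suc i) - t i) * ramp_antideriv ((s - t i) / (t (Suc i) - t i))))
                  has_real_derivative
                    (\<Sum>i<N. (\<phi> (t (Suc i)) - \<phi> (t i)) * ramp ((s - t i) / (t (Suc i) - t i))))
                  (at s)"
    by (intro DERIV_sum DERIV_cmult has_real_derivative_scaled_ramp_antideriv width)
  ultimately show ?thesis
    unfolding linear_interp_antideriv_def[abs_def] linear_interp_eq by (rule DERIV_add)
qed

lemma interp_piece_in_LS_inc:
  assumes "mono \<phi>" "strict_mono t"
  shows "interp_piece \<phi> t j \<in> LS_inc 2"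
proof (cases j)
  case 0
  show ?thesis
    unfolding 0 interp_piece_def nat.case by (rule const_in_LS_inc)
next
  case (Suc i)
  have "t i < t (Suc i)"
    using strict_monoD[OF assms(2)] by simp
  with assms(1) have "0 \<le> \<phi> (t (Suc i)) - \<phi> (t i)" "0 < t (Suc i) - t i"
    by (auto intro: monoD less_imp_le)
  then show ?thesis
    unfolding Suc interp_piece_def nat.case by (rule scaled_ramp_in_LS_inc)
qed

lemma mono_linear_interp:
  assumes "mono \<phi>" "strict_mono t"
  shows "mono (linear_interp \<phi> t N)"
proof (rule monoI)
  fix x y :: real
  assume "x \<le> y"
  have "t i < t (Suc i)" for i
    using strict_monoD[OF assms(2)] by simp
  with assms(1) have "0 \<le> \<phi> (t (Suc i)) - \<phi> (t i)" "0 \<le> t (Suc i) - t i" for i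
    by (auto intro: monoD less_imp_le)
  with \<open>x \<le> y\<close> show "linear_interp \<phi> t N x \<le> linear_interp \<phi> t N y"
    unfolding linear_interp_eq
    by (auto intro!: sum_mono mult_left_mono ramp_mono divide_right_mono)
qed

lemma exists_grid_cell:
  fixes t :: "nat \<Rightarrow> real"
  assumes "0 < N" "t 0 \<le> s" "s \<le> t N"
  shows "\<exists>k<N. t k \<le> s \<and> s \<le> t (Suc k)"
  using assms
proof (induction N)
  case (Suc n)
  show ?case
  proof (cases "t n \<le> s")
    case True
    with Suc.prems show ?thesis by auto
  next
    case False
    with Suc.prems(2) have "0 < n"
      by (cases n) auto
    with Suc False obtain k where "k < n" "t k \<le> s" "s \<le> t (Suc k)"
      by auto
    then show ?thesis
      by (auto intro!: exI[of _ k])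
  qed
qed simp

lemma linear_interp_on_cell:
  assumes "strict_mono t" "k < N" "t k \<le> s" "s \<le> t (Suc k)"
  shows "linear_interp \<phi> t N s =
           \<phi> (t k) + (\<phi> (t (Suc k)) - \<phi> (t k)) * ramp ((s - t k) / (t (Suc k) - t k))"
proof -
  define g where "g i = (\<phi> (t (Suc i)) - \<phi> (t i)) * ramp ((s - t i) / (t (Suc i) - t i))" for i
  have width: "t (Suc i) - t i > 0" for i
    using strict_monoD[OF assms(1), of i "Suc i"] by simp
  have below: "g i = \<phi> (t (Suc i)) - \<phi> (t i)" if "i < k" for i
  proof -
    have "t (Suc i) \<le> t k"
      using that strict_mono_less_eq[OF assms(1)] by simp
    with assms(3) width[of i] have "1 \<le> (s - t i) / (t (Suc i) - t i)"
      by (simp add: field_simps)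
    then show ?thesis
      by (simp add: g_def ramp_eq_1)
  qed
  have above: "g i = 0" if "Suc k \<le> i" for i
  proof -
    have "t (Suc k) \<le> t i"
      using that strict_mono_less_eq[OF assms(1)] by simp
    with assms(4) width[of i] have "(s - t i) / (t (Suc i) - t i) \<le> 0"
      by (simp add: divide_nonpos_pos)
    then show ?thesis
      by (simp add: g_def ramp_eq_0)
  qed
  have "(\<Sum>i<N. g i) = (\<Sum>i<Suc k. g i)"
    using assms(2) above by (intro sum.mono_neutral_right) auto
  also have "\<dots> = (\<Sum>i<k. \<phi> (t (Suc i)) - \<phi> (t i)) + g k"
    using below by simp
  also have "(\<Sum>i<k. \<phi> (t (Suc i)) - \<phi> (t i)) = \<phi> (t k) - \<phi> (t 0)"
    by (rule sum_lessThan_telescope)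
  finally show ?thesis
    unfolding linear_interp_eq g_def by simp
qed

lemma linear_interp_error:
  assumes "mono \<phi>" "strict_mono t" "k < N" "t k \<le> s" "s \<le> t (Suc k)"
  shows "\<bar>\<phi> s - linear_interp \<phi> t N s\<bar> \<le> \<phi> (t (Suc k)) - \<phi> (t k)"
proof -
  define r where "r = ramp ((s - t k) / (t (Suc k) - t k))"
  have "\<phi> (t k) \<le> \<phi> s" "\<phi> s \<le> \<phi> (t (Suc k))"
    using assms by (auto intro: monoD)
  moreover have "0 \<le> (\<phi> (t (Suc k)) - \<phi> (t k)) * r"
    "(\<phi> (t (Suc k)) - \<phi> (t k)) * r \<le> \<phi> (t (Suc k)) - \<phi> (t k)"
    using calculation ramp_nonneg ramp_le_one unfolding r_def by (auto intro: mult_left_le)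
  moreover have "linear_interp \<phi> t N s = \<phi> (t k) + (\<phi> (t (Suc k)) - \<phi> (t k)) * r"
    unfolding r_def by (rule linear_interp_on_cell[OF assms(2-5)])
  ultimately show ?thesis
    by (simp add: abs_le_iff)
qed

lemma uniform_grid_interp_error:
  fixes \<phi> :: "real \<Rightarrow> real"
  assumes mono: "mono \<phi>" and lip: "\<And>s t. \<bar>\<phi> s - \<phi> t\<bar> \<le> L * \<bar>s - t\<bar>"
    and "a < b" "\<delta> > 0"
  obtains t N where "strict_mono t"
    "\<And>s. s \<in> {a..b} \<Longrightarrow> \<bar>\<phi> s - linear_interp \<phi> t N s\<bar> \<le> \<delta>"
proof -
  define N :: nat where "N = nat \<lceil>L * (b - a) / \<delta>\<rceil> + 1"
  define D where "D = (b - a) / real N"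
  define t where "t i = a + real i * D" for i
  have "N > 0" "L * (b - a) / \<delta> < real N"
    unfolding N_def by linarith+
  then have "D > 0" "L * D < \<delta>"
    using \<open>a < b\<close> \<open>\<delta> > 0\<close> by (auto simp: D_def field_simps)
  have "real N * D = b - a"
    using \<open>N > 0\<close> by (simp add: D_def)
  then have t: "strict_mono t" "t 0 = a" "t N = b" "\<And>k. t (Suc k) - t k = D"
    using \<open>D > 0\<close> by (auto intro!: strict_monoI mult_strict_right_mono simp: t_def algebra_simps)
  have "\<bar>\<phi> s - linear_interp \<phi> t N s\<bar> \<le> \<delta>" if s: "s \<in> {a..b}" for s
  proof -
    obtain k where k: "k < N" "t k \<le> s" "s \<le> t (Suc k)"
      using exists_grid_cell[of N t s] \<open>N > 0\<close> t s by auto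
    have "\<bar>\<phi> s - linear_interp \<phi> t N s\<bar> \<le> \<phi> (t (Suc k)) - \<phi> (t k)"
      by (rule linear_interp_error[OF mono t(1) k])
    also have "\<dots> \<le> L * \<bar>t (Suc k) - t k\<bar>"
      using lip by (rule abs_le_D1)
    finally show ?thesis
      using \<open>L * D < \<delta>\<close> t(4) \<open>D > 0\<close> by simp
  qed
  with t(1) show ?thesis
    using that by blast
qed

lemma convex_C1_approx_by_ramps:
  fixes \<psi> \<psi>' :: "real \<Rightarrow> real"
  assumes der: "\<And>s. (\<psi> has_real_derivative \<psi>' s) (at s)"
    and mono: "mono \<psi>'"
    and lip: "\<And>s t. \<bar>\<psi>' s - \<psi>' t\<bar> \<le> L * \<bar>s - t\<bar>"
    and "a < b" "\<epsilon> > 0"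
  obtains q :: nat and \<sigma> \<Psi> where "\<forall>j<q. \<sigma> j \<in> LS_inc 2"
    "\<And>s. (\<Psi> has_real_derivative (\<Sum>j<q. \<sigma> j s)) (at s)" "convex_on UNIV \<Psi>"
    "\<And>s. s \<in> {a..b} \<Longrightarrow> \<bar>\<psi> s - \<Psi> s\<bar> \<le> \<epsilon>"
    "\<And>s. s \<in> {a..b} \<Longrightarrow> \<bar>\<psi>' s - (\<Sum>j<q. \<sigma> j s)\<bar> \<le> \<epsilon>"
proof -
  define \<delta> where "\<delta> = \<epsilon> / (b - a + 1)"
  have \<delta>: "0 < \<delta>" "\<delta> \<le> \<epsilon>" "(b - a) * \<delta> \<le> \<epsilon>"
    using \<open>a < b\<close> \<open>\<epsilon> > 0\<close> by (auto simp: \<delta>_def field_simps)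
  obtain t N where t: "strict_mono t"
    and deriv_err: "\<And>s. s \<in> {a..b} \<Longrightarrow> \<bar>\<psi>' s - linear_interp \<psi>' t N s\<bar> \<le> \<delta>"
    using uniform_grid_interp_error[OF mono lip \<open>a < b\<close> \<delta>(1)] by blast
  define S where "S = linear_interp \<psi>' t N"
  define \<Psi> where "\<Psi> s = linear_interp_antideriv \<psi>' t N s + (\<psi> a - linear_interp_antideriv \<psi>' t N a)"
    for s
  have \<Psi>_der: "(\<Psi> has_real_derivative S s) (at s)" for s
    unfolding \<Psi>_def[abs_def] S_def
    using DERIV_add[OF has_real_derivative_linear_interp_antideriv[OF t(1)] DERIV_const] by simp
  have fun_err: "\<bar>\<psi> s - \<Psi> s\<bar> \<le> \<epsilon>" if "s \<in> {a..b}" for s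
  proof -
    have "((\<lambda>s. \<psi> s - \<Psi> s) has_real_derivative \<psi>' z - S z) (at z within {a..b})" for z
      by (rule has_field_derivative_at_within) (intro DERIV_diff der \<Psi>_der)
    then have "norm ((\<psi> s - \<Psi> s) - (\<psi> a - \<Psi> a)) \<le> \<delta> * norm (s - a)"
      using deriv_err that \<open>a < b\<close> unfolding S_def
      by (intro field_differentiable_bound[of "{a..b}" "\<lambda>s. \<psi> s - \<Psi> s"]) auto
    moreover have "\<delta> * \<bar>s - a\<bar> \<le> \<delta> * (b - a)"
      using that \<delta>(1) by (intro mult_left_mono) auto
    ultimately show ?thesis
      using \<open>s \<in> {a..b}\<close> \<delta>(3) by (simp add: \<Psi>_def mult.commute)
  qed
  show ?thesis
  proof (rule that[of "Suc N" "interp_piece \<psi>' t" \<Psi>])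
    show "\<forall>j<Suc N. interp_piece \<psi>' t j \<in> LS_inc 2"
      by (auto intro: interp_piece_in_LS_inc[OF mono t(1)])
    show "(\<Psi> has_real_derivative (\<Sum>j<Suc N. interp_piece \<psi>' t j s)) (at s)" for s
      using \<Psi>_der by (simp add: S_def linear_interp_def)
    show "convex_on UNIV \<Psi>"
      using \<Psi>_der monoD[OF mono_linear_interp[OF mono t(1)]]
      by (intro convex_on_realI[where f' = S]) (auto simp: S_def)
    show "\<bar>\<psi> s - \<Psi> s\<bar> \<le> \<epsilon>" if "s \<in> {a..b}" for s
      using fun_err[OF that] .
    show "\<bar>\<psi>' s - (\<Sum>j<Suc N. interp_piece \<psi>' t j s)\<bar> \<le> \<epsilon>" if "s \<in> {a..b}" for s
      using deriv_err[OF that] \<delta>(2) by (simp add: linear_interp_def)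
  qed
qed

subsection \<open>Class (i)\<close>

lemma sum_lessThan_append:
  fixes f g :: "nat \<Rightarrow> 'b::comm_monoid_add"
  shows "(\<Sum>j<p + q. if j < p then f j else g (j - p)) = (\<Sum>j<p. f j) + (\<Sum>j<q. g j)"
  by (induction q) (auto simp: add.assoc)

lemma has_derivative_zero_gradient: "((\<lambda>x. 0) has_derivative (\<lambda>h. (0::'a::real_inner) \<bullet> h)) F"
  by (rule has_derivative_eq_rhs[OF has_derivative_const]) (simp add: fun_eq_iff)

lemma class_i_zero: "(\<lambda>x. 0) \<in> class_i m"
  unfolding class_i_def
  by (auto intro!: exI[of _ "0::nat"] has_derivative_zero_gradient simp: ridge_sum_def fun_eq_iff)

lemma class_i_add:
  assumes "g1 \<in> class_i m" "g2 \<in> class_i m"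
  shows "(\<lambda>x. g1 x + g2 x) \<in> class_i m"
proof -
  obtain p1 \<psi>1 v1 q1 W1 \<sigma>1 where 1: "\<forall>i<p1. convex_on UNIV (\<psi>1 i)" "g1 = ridge_sum p1 \<psi>1 v1"
    "\<forall>j<(q1::nat). \<sigma>1 j \<in> LS_inc m"
    "\<And>x. (g1 has_derivative (\<lambda>h. (\<Sum>j<q1. \<sigma>1 j (W1 j \<bullet> x) *\<^sub>R W1 j) \<bullet> h)) (at x)"
    using assms(1) unfolding class_i_def by blast
  obtain p2 \<psi>2 v2 q2 W2 \<sigma>2 where 2: "\<forall>i<p2. convex_on UNIV (\<psi>2 i)" "g2 = ridge_sum p2 \<psi>2 v2"
    "\<forall>j<(q2::nat). \<sigma>2 j \<in> LS_inc m"
    "\<And>x. (g2 has_derivative (\<lambda>h. (\<Sum>j<q2. \<sigma>2 j (W2 j \<bullet> x) *\<^sub>R W2 j) \<bullet> h)) (at x)"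
    using assms(2) unfolding class_i_def by blast
  define \<psi> where "\<psi> i = (if i < p1 then \<psi>1 i else \<psi>2 (i - p1))" for i
  define v where "v i = (if i < p1 then v1 i else v2 (i - p1))" for i
  define \<sigma> where "\<sigma> j = (if j < q1 then \<sigma>1 j else \<sigma>2 (j - q1))" for j
  define W where "W j = (if j < q1 then W1 j else W2 (j - q1))" for j
  have "(\<lambda>x. g1 x + g2 x) = ridge_sum (p1 + p2) \<psi> v"
  proof
    fix x
    have "ridge_sum (p1 + p2) \<psi> v x =
      (\<Sum>i<p1 + p2. if i < p1 then \<psi>1 i (v1 i \<bullet> x) else \<psi>2 (i - p1) (v2 (i - p1) \<bullet> x))"
      unfolding ridge_sum_def \<psi>_def v_def by (intro sum.cong) auto
    also have "\<dots> = g1 x + g2 x"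
      unfolding 1(2) 2(2) ridge_sum_def by (rule sum_lessThan_append)
    finally show "g1 x + g2 x = ridge_sum (p1 + p2) \<psi> v x" ..
  qed
  moreover have "\<forall>i<p1 + p2. convex_on UNIV (\<psi> i)" "\<forall>j<q1 + q2. \<sigma> j \<in> LS_inc m"
    using 1(1,3) 2(1,3) by (auto simp: \<psi>_def \<sigma>_def)
  moreover have "((\<lambda>x. g1 x + g2 x) has_derivative
                   (\<lambda>h. (\<Sum>j<q1 + q2. \<sigma> j (W j \<bullet> x) *\<^sub>R W j) \<bullet> h)) (at x)" for x
  proof -
    have "(\<Sum>j<q1 + q2. \<sigma> j (W j \<bullet> x) *\<^sub>R W j) =
      (\<Sum>j<q1 + q2. if j < q1 then \<sigma>1 j (W1 j \<bullet> x) *\<^sub>R W1 j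
                    else \<sigma>2 (j - q1) (W2 (j - q1) \<bullet> x) *\<^sub>R W2 (j - q1))"
      unfolding \<sigma>_def W_def by (intro sum.cong) auto
    also have "\<dots> = (\<Sum>j<q1. \<sigma>1 j (W1 j \<bullet> x) *\<^sub>R W1 j) + (\<Sum>j<q2. \<sigma>2 j (W2 j \<bullet> x) *\<^sub>R W2 j)"
      by (rule sum_lessThan_append)
    finally show ?thesis
      using has_derivative_add[OF 1(4) 2(4)] by (simp add: inner_add_left)
  qed
  ultimately show ?thesis
    unfolding class_i_def by blast
qed

lemma ridge_in_class_i:
  fixes w :: "'a::euclidean_space" and q :: nat
  assumes "convex_on UNIV \<Psi>" "\<And>s. (\<Psi> has_real_derivative (\<Sum>j<q. \<sigma> j s)) (at s)"
    "\<forall>j<q. \<sigma> j \<in> LS_inc m"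
  shows "(\<lambda>x. \<Psi> (w \<bullet> x)) \<in> class_i m"
proof -
  have "(\<lambda>x. \<Psi> (w \<bullet> x)) = ridge_sum 1 (\<lambda>_. \<Psi>) (\<lambda>_. w)"
    by (simp add: ridge_sum_def fun_eq_iff)
  moreover have "((\<lambda>x. \<Psi> (w \<bullet> x)) has_derivative
                   (\<lambda>h. (\<Sum>j<q. \<sigma> j (w \<bullet> x) *\<^sub>R w) \<bullet> h)) (at x)" for x
    using has_derivative_ridge[of \<Psi> "\<lambda>s. \<Sum>j<q. \<sigma> j s", OF assms(2)]
    by (simp add: scaleR_sum_left)
  ultimately show ?thesis
    unfolding class_i_def mem_Collect_eq using assms(1,3)
    by (intro conjI exI[of _ "1::nat"] exI[of _ "\<lambda>_. \<Psi>"] exI[of _ "\<lambda>_. w"] exI[of _ q]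
              exI[of _ \<sigma>]) auto
qed

text \<open>Pointwise form of C1_norm \<Omega> (f - g) \<le> e; unlike the suprema in C1_norm it adds up
  without boundedness side conditions.\<close>

definition C1_close_on ::
    "'a::euclidean_space set \<Rightarrow> real \<Rightarrow> ('a \<Rightarrow> real) \<Rightarrow> ('a \<Rightarrow> real) \<Rightarrow> bool" where
  "C1_close_on \<Omega> e f g \<longleftrightarrow> (\<exists>F G. (\<forall>x. (f has_derivative (\<lambda>h. F x \<bullet> h)) (at x)) \<and>
      (\<forall>x. (g has_derivative (\<lambda>h. G x \<bullet> h)) (at x)) \<and>
      (\<forall>x\<in>\<Omega>. \<bar>f x - g x\<bar> \<le> e \<and> norm (F x - G x) \<le> e))"

lemma C1_close_on_imp_C1_norm_le:
  assumes "\<Omega> \<noteq> {}" "C1_close_on \<Omega> e f g"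
  shows "C1_norm \<Omega> (\<lambda>x. f x - g x) \<le> 2 * e"
proof -
  obtain F G where FG: "\<And>x. (f has_derivative (\<lambda>h. F x \<bullet> h)) (at x)"
    "\<And>x. (g has_derivative (\<lambda>h. G x \<bullet> h)) (at x)"
    "\<And>x. x \<in> \<Omega> \<Longrightarrow> \<bar>f x - g x\<bar> \<le> e \<and> norm (F x - G x) \<le> e"
    using assms(2) unfolding C1_close_on_def by blast
  have "grad (\<lambda>x. f x - g x) x = F x - G x" for x
    using has_derivative_diff[OF FG(1,2)] by (intro grad_eqI) (simp add: inner_diff_left)
  moreover have "(SUP x\<in>\<Omega>. \<bar>f x - g x\<bar>) \<le> e" "(SUP x\<in>\<Omega>. norm (F x - G x)) \<le> e"
    using FG(3) assms(1) by (auto intro!: cSUP_least)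
  ultimately show ?thesis
    unfolding C1_norm_def by simp
qed

lemma C1_close_on_zero: "0 \<le> e \<Longrightarrow> C1_close_on \<Omega> e (\<lambda>x. 0) (\<lambda>x. 0)"
  unfolding C1_close_on_def by (auto intro!: exI[of _ "\<lambda>_. 0"] has_derivative_zero_gradient)

lemma C1_close_on_add:
  assumes "C1_close_on \<Omega> e1 f1 g1" "C1_close_on \<Omega> e2 f2 g2"
  shows "C1_close_on \<Omega> (e1 + e2) (\<lambda>x. f1 x + f2 x) (\<lambda>x. g1 x + g2 x)"
proof -
  obtain F1 G1 where 1: "\<And>x. (f1 has_derivative (\<lambda>h. F1 x \<bullet> h)) (at x)"
    "\<And>x. (g1 has_derivative (\<lambda>h. G1 x \<bullet> h)) (at x)"
    "\<And>x. x \<in> \<Omega> \<Longrightarrow> \<bar>f1 x - g1 x\<bar> \<le> e1 \<and> norm (F1 x - G1 x) \<le> e1"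
    using assms(1) unfolding C1_close_on_def by blast
  obtain F2 G2 where 2: "\<And>x. (f2 has_derivative (\<lambda>h. F2 x \<bullet> h)) (at x)"
    "\<And>x. (g2 has_derivative (\<lambda>h. G2 x \<bullet> h)) (at x)"
    "\<And>x. x \<in> \<Omega> \<Longrightarrow> \<bar>f2 x - g2 x\<bar> \<le> e2 \<and> norm (F2 x - G2 x) \<le> e2"
    using assms(2) unfolding C1_close_on_def by blast
  have "((\<lambda>x. f1 x + f2 x) has_derivative (\<lambda>h. (F1 x + F2 x) \<bullet> h)) (at x)"
       "((\<lambda>x. g1 x + g2 x) has_derivative (\<lambda>h. (G1 x + G2 x) \<bullet> h)) (at x)" for x
    using has_derivative_add[OF 1(1) 2(1)] has_derivative_add[OF 1(2) 2(2)]
    by (simp_all add: inner_add_left)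
  moreover have "norm ((F1 x + F2 x) - (G1 x + G2 x)) \<le> e1 + e2" if "x \<in> \<Omega>" for x
    using norm_triangle_ineq[of "F1 x - G1 x" "F2 x - G2 x"] 1(3)[OF that] 2(3)[OF that]
    by (simp add: algebra_simps)
  moreover have "\<bar>(f1 x + f2 x) - (g1 x + g2 x)\<bar> \<le> e1 + e2" if "x \<in> \<Omega>" for x
    using 1(3)[OF that] 2(3)[OF that] by linarith
  ultimately show ?thesis
    unfolding C1_close_on_def
    by (intro exI[of _ "\<lambda>x. F1 x + F2 x"] exI[of _ "\<lambda>x. G1 x + G2 x"] conjI allI ballI)
qed

lemma C1_close_on_ridge:
  fixes w :: "'a::euclidean_space"
  assumes "\<And>s. (\<psi> has_real_derivative \<psi>' s) (at s)" "\<And>s. (\<Psi> has_real_derivative \<Psi>' s) (at s)"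
    and "\<And>x. x \<in> \<Omega> \<Longrightarrow> \<bar>\<psi> (w \<bullet> x) - \<Psi> (w \<bullet> x)\<bar> \<le> e"
    and "\<And>x. x \<in> \<Omega> \<Longrightarrow> \<bar>\<psi>' (w \<bullet> x) - \<Psi>' (w \<bullet> x)\<bar> * norm w \<le> e"
  shows "C1_close_on \<Omega> e (\<lambda>x. \<psi> (w \<bullet> x)) (\<lambda>x. \<Psi> (w \<bullet> x))"
  unfolding C1_close_on_def
proof (intro exI conjI allI ballI)
  show "((\<lambda>x. \<psi> (w \<bullet> x)) has_derivative (\<lambda>h. (\<psi>' (w \<bullet> x) *\<^sub>R w) \<bullet> h)) (at x)"
       "((\<lambda>x. \<Psi> (w \<bullet> x)) has_derivative (\<lambda>h. (\<Psi>' (w \<bullet> x) *\<^sub>R w) \<bullet> h)) (at x)" for x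
    by (intro has_derivative_ridge assms(1,2))+
  fix x
  assume "x \<in> \<Omega>"
  then show "\<bar>\<psi> (w \<bullet> x) - \<Psi> (w \<bullet> x)\<bar> \<le> e"
    and "norm (\<psi>' (w \<bullet> x) *\<^sub>R w - \<Psi>' (w \<bullet> x) *\<^sub>R w) \<le> e"
    using assms(3,4) by (simp_all add: scaleR_diff_left[symmetric])
qed

lemma ridge_C1_approx_class_i:
  fixes \<Omega> :: "'a::euclidean_space set" and w :: 'a
  assumes "bounded \<Omega>" "2 \<le> m" "C11 \<psi>" "convex_on UNIV \<psi>" "\<epsilon> > 0"
  shows "\<exists>g\<in>class_i m. C1_close_on \<Omega> \<epsilon> (\<lambda>x. \<psi> (w \<bullet> x)) g"
proof -
  obtain \<psi>' L where der: "\<And>t. (\<psi> has_real_derivative \<psi>' t) (at t)"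
    and lip: "\<And>s t. \<bar>\<psi>' s - \<psi>' t\<bar> \<le> L * \<bar>s - t\<bar>"
    using assms(3) unfolding C11_def by blast
  have "mono \<psi>'"
    by (rule convex_on_imp_mono_deriv[OF der assms(4)])
  obtain M where "M > 0" and M: "\<And>x. x \<in> \<Omega> \<Longrightarrow> \<bar>w \<bullet> x\<bar> \<le> M"
    using bounded_linear_image[OF assms(1) bounded_linear_inner_right[of w]]
    unfolding bounded_pos by auto
  define \<delta> where "\<delta> = \<epsilon> / (norm w + 1)"
  have "norm w + 1 > 0"
    by (simp add: add_nonneg_pos)
  then have "\<delta> > 0" "\<delta> * (norm w + 1) = \<epsilon>"
    using assms(5) by (simp_all add: \<delta>_def)
  then have "\<delta> > 0" "\<delta> * norm w + \<delta> = \<epsilon>"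
    by (simp_all add: distrib_left)
  moreover have "0 \<le> \<delta> * norm w"
    using \<open>\<delta> > 0\<close> by simp
  ultimately have \<delta>: "\<delta> > 0" "\<delta> \<le> \<epsilon>" "\<delta> * norm w \<le> \<epsilon>"
    by linarith+
  obtain q :: nat and \<sigma> \<Psi> where \<sigma>: "\<forall>j<q. \<sigma> j \<in> LS_inc 2"
    and \<Psi>_der: "\<And>s. (\<Psi> has_real_derivative (\<Sum>j<q. \<sigma> j s)) (at s)"
    and "convex_on UNIV \<Psi>"
    and err: "\<And>s. s \<in> {-M..M} \<Longrightarrow> \<bar>\<psi> s - \<Psi> s\<bar> \<le> \<delta>"
      "\<And>s. s \<in> {-M..M} \<Longrightarrow> \<bar>\<psi>' s - (\<Sum>j<q. \<sigma> j s)\<bar> \<le> \<delta>"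
    using convex_C1_approx_by_ramps[OF der \<open>mono \<psi>'\<close> lip _ \<delta>(1), of "-M" M] \<open>M > 0\<close> by auto
  have "(\<lambda>x. \<Psi> (w \<bullet> x)) \<in> class_i m"
    using \<sigma> LS_inc_mono[OF assms(2)] by (intro ridge_in_class_i[OF \<open>convex_on UNIV \<Psi>\<close> \<Psi>_der]) auto
  moreover have "C1_close_on \<Omega> \<epsilon> (\<lambda>x. \<psi> (w \<bullet> x)) (\<lambda>x. \<Psi> (w \<bullet> x))"
  proof (rule C1_close_on_ridge[OF der \<Psi>_der])
    fix x
    assume "x \<in> \<Omega>"
    then have wx: "w \<bullet> x \<in> {-M..M}"
      using M[of x] by (auto simp: abs_le_iff)
    then show "\<bar>\<psi> (w \<bullet> x) - \<Psi> (w \<bullet> x)\<bar> \<le> \<epsilon>"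
      using err(1) \<delta>(2) by fastforce
    have "\<bar>\<psi>' (w \<bullet> x) - (\<Sum>j<q. \<sigma> j (w \<bullet> x))\<bar> * norm w \<le> \<delta> * norm w"
      using err(2)[OF wx] by (rule mult_right_mono) simp
    then show "\<bar>\<psi>' (w \<bullet> x) - (\<Sum>j<q. \<sigma> j (w \<bullet> x))\<bar> * norm w \<le> \<epsilon>"
      using \<delta>(3) by linarith
  qed
  ultimately show ?thesis
    by blast
qed

lemma ridge_sum_C1_approx_class_i:
  fixes \<Omega> :: "'a::euclidean_space set" and w :: "nat \<Rightarrow> 'a"
  assumes "bounded \<Omega>" "2 \<le> m" "\<forall>i<p. C11 (\<psi> i) \<and> convex_on UNIV (\<psi> i)" "\<epsilon> > 0"
  shows "\<exists>g\<in>class_i m. C1_close_on \<Omega> \<epsilon> (ridge_sum p \<psi> w) g"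
  using assms(3,4)
proof (induction p arbitrary: \<epsilon>)
  case 0
  have "ridge_sum 0 \<psi> w = (\<lambda>x. 0)"
    by (simp add: ridge_sum_def fun_eq_iff)
  with 0 show ?case
    by (intro bexI[OF _ class_i_zero]) (simp add: C1_close_on_zero)
next
  case (Suc p)
  obtain g1 where g1: "g1 \<in> class_i m" "C1_close_on \<Omega> (\<epsilon> / 2) (ridge_sum p \<psi> w) g1"
    using Suc.IH[of "\<epsilon> / 2"] Suc.prems by auto
  obtain g2 where g2: "g2 \<in> class_i m" "C1_close_on \<Omega> (\<epsilon> / 2) (\<lambda>x. \<psi> p (w p \<bullet> x)) g2"
    using ridge_C1_approx_class_i[OF assms(1,2), of "\<psi> p" "\<epsilon> / 2"] Suc.prems by auto
  have "ridge_sum (Suc p) \<psi> w = (\<lambda>x. ridge_sum p \<psi> w x + \<psi> p (w p \<bullet> x))"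
    by (simp add: ridge_sum_def fun_eq_iff)
  with C1_close_on_add[OF g1(2) g2(2)]
  have "C1_close_on \<Omega> \<epsilon> (ridge_sum (Suc p) \<psi> w) (\<lambda>x. g1 x + g2 x)"
    by simp
  with class_i_add[OF g1(1) g2(1)] show ?case
    by blast
qed

lemma C1_dense_class_i:
  fixes \<Omega> :: "'a::euclidean_space set"
  assumes "bounded \<Omega>" "\<Omega> \<noteq> {}" "2 \<le> m"
  shows "C1_dense_in \<Omega> (class_i m) S_set"
  unfolding C1_dense_in_def
proof (intro ballI allI impI)
  fix f :: "'a \<Rightarrow> real" and \<epsilon> :: real
  assume "f \<in> S_set" "\<epsilon> > 0"
  then obtain p \<psi> w where "\<forall>i<p. C11 (\<psi> i) \<and> convex_on UNIV (\<psi> i)" "f = ridge_sum p \<psi> w"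
    unfolding S_set_def by blast
  then obtain g where "g \<in> class_i m" "C1_close_on \<Omega> (\<epsilon> / 3) f g"
    using ridge_sum_C1_approx_class_i[OF assms(1,3)] \<open>\<epsilon> > 0\<close> by (metis divide_pos_pos zero_less_numeral)
  moreover have "C1_norm \<Omega> (\<lambda>x. f x - g x) \<le> 2 * (\<epsilon> / 3)"
    by (rule C1_close_on_imp_C1_norm_le[OF assms(2) \<open>C1_close_on \<Omega> (\<epsilon> / 3) f g\<close>])
  ultimately show "\<exists>g\<in>class_i m. C1_norm \<Omega> (\<lambda>x. f x - g x) < \<epsilon>"
    using \<open>\<epsilon> > 0\<close> by (intro bexI[of _ g]) auto
qed

subsection \<open>Class (ii)\<close>

definition kink_test :: "(real \<Rightarrow> real) \<Rightarrow> real" where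
  "kink_test h = h 2 - 2 * h 1 + 2 * h 0 - h (-1)"

lemma kink_test_diff: "kink_test (\<lambda>t. f t - g t) = kink_test f - kink_test g"
  by (simp add: kink_test_def)

lemma kink_test_sum: "kink_test (\<lambda>t. \<Sum>j\<in>A. f j t) = (\<Sum>j\<in>A. kink_test (f j))"
  by (simp add: kink_test_def sum_subtractf sum.distrib sum_distrib_left)

lemma kink_test_ramp: "kink_test ramp = -1"
  by (simp add: kink_test_def ramp_def relu_def)

lemma kink_test_scaled_relu_nonneg:
  assumes "0 \<le> c * d"
  shows "0 \<le> kink_test (\<lambda>t. c * relu (d * t + \<beta>))"
proof -
  define k where "k = relu (d * 2 + \<beta>) - 2 * relu (d + \<beta>) + 2 * relu \<beta> - relu (\<beta> - d)"
  have "kink_test (\<lambda>t. c * relu (d * t + \<beta>)) = c * k"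
    by (simp add: kink_test_def k_def algebra_simps)
  moreover from assms consider "0 \<le> c" "0 \<le> d" | "c \<le> 0" "d \<le> 0"
    by (auto simp: zero_le_mult_iff)
  then have "0 \<le> c * k"
  proof cases
    case 1
    then have "0 \<le> k"
      by (simp add: k_def relu_def max_def)
    with 1 show ?thesis
      by simp
  next
    case 2
    then have "k \<le> 0"
      by (simp add: k_def relu_def max_def)
    with 2 show ?thesis
      by (simp add: mult_nonpos_nonpos)
  qed
  ultimately show ?thesis
    by simp
qed

lemma abs_kink_test_le:
  assumes "\<And>t. t \<in> {-1, 0, 1, 2} \<Longrightarrow> \<bar>h t\<bar> \<le> B"
  shows "\<bar>kink_test h\<bar> \<le> 6 * B"
  using assms[of "-1"] assms[of 0] assms[of 1] assms[of 2]
  by (simp add: kink_test_def abs_le_iff)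

lemma kink_test_relu_layer_nonneg:
  fixes u x :: "'a::euclidean_space"
  shows "0 \<le> kink_test (\<lambda>t. u \<bullet> (\<Sum>j<q. relu (W j \<bullet> (x + t *\<^sub>R u) - b j) *\<^sub>R W j))"
proof -
  have "(\<lambda>t. u \<bullet> (\<Sum>j<q. relu (W j \<bullet> (x + t *\<^sub>R u) - b j) *\<^sub>R W j)) =
        (\<lambda>t. \<Sum>j<q. (W j \<bullet> u) * relu ((W j \<bullet> u) * t + (W j \<bullet> x - b j)))"
    by (simp add: fun_eq_iff inner_sum_right inner_add_right inner_commute algebra_simps)
  then show ?thesis
    by (simp add: kink_test_sum sum_nonneg kink_test_scaled_relu_nonneg)
qed

lemma norm_grad_le_C1_norm:
  fixes f :: "'a::euclidean_space \<Rightarrow> real"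
  assumes "compact \<Omega>" "x \<in> \<Omega>" "\<And>y. (f has_derivative (\<lambda>h. D y \<bullet> h)) (at y)"
    "continuous_on \<Omega> D"
  shows "norm (D x) \<le> C1_norm \<Omega> f"
proof -
  have "continuous_on \<Omega> f"
    using assms(3) by (intro continuous_at_imp_continuous_on ballI has_derivative_continuous)
  then have "bdd_above ((\<lambda>y. \<bar>f y\<bar>) ` \<Omega>)"
    using assms(1)
    by (intro bounded_imp_bdd_above compact_imp_bounded compact_continuous_image continuous_intros)
  then have "0 \<le> (SUP y\<in>\<Omega>. \<bar>f y\<bar>)"
    using assms(2) by (rule cSUP_upper2) simp
  moreover have "bdd_above ((\<lambda>y. norm (D y)) ` \<Omega>)"
    using assms(1,4)
    by (intro bounded_imp_bdd_above compact_imp_bounded compact_continuous_image continuous_intros)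
  then have "norm (D x) \<le> (SUP y\<in>\<Omega>. norm (D y))"
    by (rule cSUP_upper[OF assms(2)])
  moreover have "grad f y = D y" for y
    by (rule grad_eqI[OF assms(3)])
  ultimately show ?thesis
    unfolding C1_norm_def by simp
qed

lemma ramp_ridge_in_S_set: "(\<lambda>x. ramp_antideriv (w \<bullet> x - c)) \<in> S_set"
proof -
  have "\<bar>ramp (s - c) - ramp (t - c)\<bar> \<le> 1 * \<bar>s - t\<bar>" for s t
    using ramp_lipschitz[of "s - c" "t - c"] by simp
  then have "C11 (\<lambda>s. ramp_antideriv (s - c))"
    unfolding C11_def
    by (intro exI[of _ "\<lambda>s. ramp (s - c)"] exI[of _ 1] conjI allI
              has_real_derivative_shifted_ramp_antideriv)
  moreover have "convex_on UNIV (\<lambda>s. ramp_antideriv (s - c))"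
    by (intro convex_on_realI[where f' = "\<lambda>s. ramp (s - c)"]
              has_real_derivative_shifted_ramp_antideriv ramp_mono) auto
  moreover have "(\<lambda>x. ramp_antideriv (w \<bullet> x - c)) =
                   ridge_sum 1 (\<lambda>_ s. ramp_antideriv (s - c)) (\<lambda>_. w)"
    by (simp add: ridge_sum_def fun_eq_iff)
  ultimately show ?thesis
    unfolding S_set_def mem_Collect_eq
    by (intro exI[of _ "1::nat"] exI[of _ "\<lambda>_ s. ramp_antideriv (s - c)"] exI[of _ "\<lambda>_. w"]) simp
qed

lemma C1_norm_ramp_ridge_diff_class_ii_ge:
  fixes \<Omega> :: "'a::euclidean_space set" and u w x0 :: 'a
  assumes "compact \<Omega>" "w \<bullet> u = 1" "\<And>t. t \<in> {-1, 0, 1, 2} \<Longrightarrow> x0 + t *\<^sub>R u \<in> \<Omega>"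
    "g \<in> class_ii"
  shows "1 \<le> 6 * norm u * C1_norm \<Omega> (\<lambda>x. ramp_antideriv (w \<bullet> x - w \<bullet> x0) - g x)"
proof -
  obtain q :: nat and W b where
    g: "\<And>x. (g has_derivative (\<lambda>h. (\<Sum>j<q. relu (W j \<bullet> x - b j) *\<^sub>R W j) \<bullet> h)) (at x)"
    using assms(4) unfolding class_ii_def by blast
  define G where "G x = (\<Sum>j<q. relu (W j \<bullet> x - b j) *\<^sub>R W j)" for x
  define D where "D x = ramp (w \<bullet> x - w \<bullet> x0) *\<^sub>R w - G x" for x
  define C where "C = C1_norm \<Omega> (\<lambda>x. ramp_antideriv (w \<bullet> x - w \<bullet> x0) - g x)"
  have "((\<lambda>x. ramp_antideriv (w \<bullet> x - w \<bullet> x0)) has_derivative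
          (\<lambda>h. (ramp (w \<bullet> x - w \<bullet> x0) *\<^sub>R w) \<bullet> h)) (at x)" for x
    by (rule has_derivative_ridge[of "\<lambda>s. ramp_antideriv (s - w \<bullet> x0)" "\<lambda>s. ramp (s - w \<bullet> x0)",
                                  OF has_real_derivative_shifted_ramp_antideriv])
  from has_derivative_diff[OF this g]
  have D: "((\<lambda>x. ramp_antideriv (w \<bullet> x - w \<bullet> x0) - g x) has_derivative (\<lambda>h. D x \<bullet> h)) (at x)"
    for x
    by (simp add: D_def G_def inner_diff_left)
  have "continuous_on \<Omega> D"
    unfolding D_def G_def by (intro continuous_intros)
  have profile_bound: "\<bar>u \<bullet> D (x0 + t *\<^sub>R u)\<bar> \<le> norm u * C" if "t \<in> {-1, 0, 1, 2}" for t
  proof -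
    have "\<bar>u \<bullet> D (x0 + t *\<^sub>R u)\<bar> \<le> norm u * norm (D (x0 + t *\<^sub>R u))"
      by (rule Cauchy_Schwarz_ineq2)
    also have "\<dots> \<le> norm u * C"
      unfolding C_def
      by (intro mult_left_mono norm_grad_le_C1_norm[OF assms(1) assms(3)[OF that] D
                                                       \<open>continuous_on \<Omega> D\<close>] norm_ge_zero)
    finally show ?thesis .
  qed
  have "u \<bullet> D (x0 + t *\<^sub>R u) = ramp t - u \<bullet> G (x0 + t *\<^sub>R u)" for t
  proof -
    have "w \<bullet> (x0 + t *\<^sub>R u) - w \<bullet> x0 = t" "u \<bullet> w = 1"
      using assms(2) by (simp_all add: inner_add_right inner_commute)
    then show ?thesis
      by (simp add: D_def inner_diff_right)
  qed
  then have "kink_test (\<lambda>t. u \<bullet> D (x0 + t *\<^sub>R u)) \<le> -1"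
    using kink_test_relu_layer_nonneg[of u W x0 b q]
    by (simp add: kink_test_diff kink_test_ramp G_def)
  moreover have "\<bar>kink_test (\<lambda>t. u \<bullet> D (x0 + t *\<^sub>R u))\<bar> \<le> 6 * (norm u * C)"
    by (rule abs_kink_test_le) (rule profile_bound)
  ultimately show ?thesis
    unfolding C_def[symmetric] by linarith
qed

lemma not_C1_dense_class_ii:
  fixes \<Omega> :: "'a::euclidean_space set"
  assumes "compact \<Omega>" "interior \<Omega> \<noteq> {}"
  shows "\<not> C1_dense_in \<Omega> class_ii S_set"
proof
  assume dense: "C1_dense_in \<Omega> class_ii S_set"
  obtain x0 r where "r > 0" "ball x0 r \<subseteq> \<Omega>"
    using assms(2) by (auto simp: mem_interior)
  obtain e :: 'a where "e \<in> Basis"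
    using nonempty_Basis by blast
  define u where "u = (r / 3) *\<^sub>R e"
  define w where "w = (3 / r) *\<^sub>R e"
  have "w \<bullet> u = 1" "norm u = r / 3"
    using \<open>e \<in> Basis\<close> \<open>r > 0\<close> by (simp_all add: u_def w_def)
  have segment: "x0 + t *\<^sub>R u \<in> \<Omega>" if "t \<in> {-1, 0, 1, 2}" for t
  proof -
    have "dist x0 (x0 + t *\<^sub>R u) = \<bar>t\<bar> * norm u"
      by (simp add: dist_norm)
    also have "\<dots> < r"
      using that \<open>norm u = r / 3\<close> \<open>r > 0\<close> by auto
    finally show ?thesis
      using \<open>ball x0 r \<subseteq> \<Omega>\<close> by auto
  qed
  have "1 / (2 * r) > 0"
    using \<open>r > 0\<close> by simp
  from dense[unfolded C1_dense_in_def, rule_format, OF ramp_ridge_in_S_set this]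
  obtain g where "g \<in> class_ii"
    "C1_norm \<Omega> (\<lambda>x. ramp_antideriv (w \<bullet> x - w \<bullet> x0) - g x) < 1 / (2 * r)"
    by blast
  with segment have "1 \<le> 2 * r * C1_norm \<Omega> (\<lambda>x. ramp_antideriv (w \<bullet> x - w \<bullet> x0) - g x)"
    using C1_norm_ramp_ridge_diff_class_ii_ge[OF assms(1) \<open>w \<bullet> u = 1\<close>, of x0 g]
    unfolding \<open>norm u = r / 3\<close> by simp
  moreover have "2 * r * C1_norm \<Omega> (\<lambda>x. ramp_antideriv (w \<bullet> x - w \<bullet> x0) - g x) < 2 * r * (1 / (2 * r))"
    using \<open>C1_norm \<Omega> _ < 1 / (2 * r)\<close> \<open>r > 0\<close> by (intro mult_strict_left_mono) auto
  ultimately show False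
    using \<open>r > 0\<close> by simp
qed

theorem corollary1:
  fixes \<Omega> :: "'a::euclidean_space set" and m :: nat
  assumes "convex \<Omega>" and "compact \<Omega>" and "interior \<Omega> \<noteq> {}" and "m \<ge> 2"
  shows "C1_dense_in \<Omega> (class_i m) S_set \<and> \<not> C1_dense_in \<Omega> class_ii S_set"
proof
  have "\<Omega> \<noteq> {}"
    using assms(3) interior_subset by blast
  with assms(2,4) show "C1_dense_in \<Omega> (class_i m) S_set"
    by (intro C1_dense_class_i compact_imp_bounded)
  show "\<not> C1_dense_in \<Omega> class_ii S_set"
    using assms(2,3) by (rule not_C1_dense_class_ii)
qed

end
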